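(* Assume the setting in the context (evolution systems $U_n$, $n\ge0$, satisfying $(\overline{\mathrm P}_1)$ and $(\overline{\mathrm P}_2)$), let $T>0$, let $\mathcal F\subset X$ be relatively compact, and let $(f_n)$ be a sequence in $L^\infty([0,T],X)$ such that $f_n(t)\in\mathcal F$ for a.e. $t\in[0,T]$ and every $n$. Then $$\int_0^t\big[U_n(t,s)-U_0(t,s)\big]f_n(s)\,ds\to0\quad\text{in }X^\alpha$$ as $n\to+\infty$, uniformly with respect to $t\in[0,T]$.
   Context: $X$ is a Banach space, $\alpha\in(0,1)$, and $X^\alpha\subset X$ is a Banach space with norm $\|\cdot\|_\alpha$ continuously and densely embedded in $X$. For each $n\ge0$, $\{U_n(t,s)\}_{t\ge s\ge0}$ is the evolution system generated by a family $\{A_n(t)\}_{t\ge0}$ of linear operators satisfying the standard parabolic conditions (sectorial operators with common domain, uniform resolvent bounds, Hölder continuity in $t$), with $U_n(t,s)X\subset X^\alpha$ for $t>s$. $(\overline{\mathrm P}_1)$: there is $K>0$ with $\|U_n(t,s)\|_{\mathcal L(X^\alpha,X^\alpha)}\le K$ and $\|U_n(t,s)\|_{\mathcal L(X,X^\alpha)}\le K(1+(t-s)^{-\alpha})$ for all $t>s\ge0$ and all $n\ge0$. $(\overline{\mathrm P}_2)$: for every $\bar u\in X^\alpha$ and $T'>0$, $U_n(t,s)\bar u\to U_0(t,s)\bar u$ in $X^\alpha$ uniformly in $t\in[0,T']$, $s\in[0,t]$. *)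

theory Defs
  imports "HOL-Analysis.Analysis"
begin

definition evolution_system :: "(real \<Rightarrow> real \<Rightarrow> 'a::real_normed_vector \<Rightarrow> 'a) \<Rightarrow> bool" where
  "evolution_system U \<longleftrightarrow>
     (\<forall>t s. 0 \<le> s \<and> s \<le> t \<longrightarrow> bounded_linear (U t s)) \<and>
     (\<forall>t. 0 \<le> t \<longrightarrow> U t t = id) \<and>
     (\<forall>t r s. 0 \<le> s \<and> s \<le> r \<and> r \<le> t \<longrightarrow> U t r \<circ> U r s = U t s) \<and>
     (\<forall>x. continuous_on {(t, s). 0 \<le> s \<and> s \<le> t} (\<lambda>(t, s). U t s x))"

end

theory Submission
  imports Defs
begin

text \<open>
  Write \<open>D\<^sub>n(t,s) = V\<^sub>n(t,s) - V\<^sub>0(t,s)\<close>. By \<open>(P1)\<close>,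
  \<open>\<parallel>D\<^sub>n(t,s) x\<parallel> \<le> 2K (1 + (t - s)\<^sup>-\<^sup>\<alpha>) \<parallel>x\<parallel>\<close>, and the weight is integrable in \<open>s\<close> because
  \<open>\<alpha> < 1\<close>. Given \<open>\<delta> > 0\<close>, the compact closure of \<open>F\<close> is covered by finitely many balls
  of radius \<open>\<delta>\<close> centred in the dense range of the embedding. At the centres \<open>(P2)\<close> makes
  \<open>D\<^sub>n(t,s)\<close> uniformly small for large \<open>n\<close>, and on each ball linearity adds at most
  \<open>2K\<delta>\<close> times the weight. Integrating over \<open>[0,t]\<close> gives a bound uniform in \<open>t\<close>.

  The target space need not be separable, so the integrals are Henstock--Kurzweil integrals and
  integrability is shown by hand: on \<open>[0,c]\<close> with \<open>c < t\<close> the integrand is approximated by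
  a finitely-valued selection along the same kind of finite net, each piece being an indicator
  times the continuous function \<open>s \<mapsto> D\<^sub>n(t,s) z\<close>, and near \<open>s = t\<close> it is dominated
  by the integrable weight.
\<close>

hide_const (open) Polynomial.content

section \<open>Integrability of Caratheodory integrands\<close>

lemma norm_riemann_sum_diff_le:
  fixes f g :: "real \<Rightarrow> 'b::real_normed_vector"
  assumes D: "D tagged_division_of {a..b}"
    and le: "\<And>x. x \<in> {a..b} \<Longrightarrow> norm (f x - g x) \<le> h x"
  shows "norm ((\<Sum>(x,K)\<in>D. content K *\<^sub>R f x) - (\<Sum>(x,K)\<in>D. content K *\<^sub>R g x))
          \<le> (\<Sum>(x,K)\<in>D. content K *\<^sub>R h x)"
proof -
  have "norm ((\<Sum>(x,K)\<in>D. content K *\<^sub>R f x) - (\<Sum>(x,K)\<in>D. content K *\<^sub>R g x))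
      = norm (\<Sum>(x,K)\<in>D. content K *\<^sub>R (f x - g x))"
    by (simp add: sum_subtractf[symmetric] split_def scaleR_diff_right)
  also have "\<dots> \<le> (\<Sum>(x,K)\<in>D. content K *\<^sub>R h x)"
  proof (rule sum_norm_le, clarify)
    fix x K assume "(x, K) \<in> D"
    then have "x \<in> {a..b}" using tagged_division_ofD(2,3)[OF D] by fastforce
    then show "norm (content K *\<^sub>R (f x - g x)) \<le> content K *\<^sub>R h x"
      using le by (simp add: mult_left_mono)
  qed
  finally show ?thesis .
qed

lemma riemann_sum_near_integral_of_dominated_approx:
  fixes f g :: "real \<Rightarrow> 'b::banach"
  assumes g: "g integrable_on {a..b}" and h: "h integrable_on {a..b}"
    and le: "\<And>x. x \<in> {a..b} \<Longrightarrow> norm (f x - g x) \<le> h x" and e: "e > 0"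
  obtains \<gamma> where "gauge \<gamma>"
    "\<And>D. D tagged_division_of cbox a b \<Longrightarrow> \<gamma> fine D \<Longrightarrow>
      norm ((\<Sum>(x,K)\<in>D. content K *\<^sub>R f x) - integral {a..b} g) < integral {a..b} h + e"
proof -
  have "(g has_integral integral {a..b} g) (cbox a b)"
    using g by (simp add: has_integral_integral)
  then obtain \<gamma>1 where \<gamma>1: "gauge \<gamma>1" and G1: "\<And>D. D tagged_division_of (cbox a b) \<Longrightarrow> \<gamma>1 fine D \<Longrightarrow>
      norm ((\<Sum>(x,K)\<in>D. content K *\<^sub>R g x) - integral {a..b} g) < e/2"
    unfolding has_integral using e by (metis (no_types, lifting) divide_pos_pos zero_less_numeral)
  have "(h has_integral integral {a..b} h) (cbox a b)"
    using h by (simp add: has_integral_integral)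
  then obtain \<gamma>2 where \<gamma>2: "gauge \<gamma>2" and G2: "\<And>D. D tagged_division_of (cbox a b) \<Longrightarrow> \<gamma>2 fine D \<Longrightarrow>
      norm ((\<Sum>(x,K)\<in>D. content K *\<^sub>R h x) - integral {a..b} h) < e/2"
    unfolding has_integral using e by (metis (no_types, lifting) divide_pos_pos zero_less_numeral)
  have "norm ((\<Sum>(x,K)\<in>D. content K *\<^sub>R f x) - integral {a..b} g) < integral {a..b} h + e"
    if D: "D tagged_division_of (cbox a b)" "\<gamma>1 fine D" "\<gamma>2 fine D" for D
  proof -
    have "norm ((\<Sum>(x,K)\<in>D. content K *\<^sub>R f x) - (\<Sum>(x,K)\<in>D. content K *\<^sub>R g x))
        \<le> (\<Sum>(x,K)\<in>D. content K *\<^sub>R h x)"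
      by (rule norm_riemann_sum_diff_le[OF _ le]) (use D(1) in simp)
    also have "\<dots> < integral {a..b} h + e/2"
      using G2[OF D(1,3)] unfolding real_norm_def by linarith
    finally have "norm ((\<Sum>(x,K)\<in>D. content K *\<^sub>R f x) - (\<Sum>(x,K)\<in>D. content K *\<^sub>R g x))
        < integral {a..b} h + e/2" .
    from norm_diff_triangle_less[OF this G1[OF D(1,2)]] show ?thesis
      by simp
  qed
  then show thesis
    using that[OF gauge_Int[OF \<gamma>1 \<gamma>2]] unfolding fine_Int by blast
qed

lemma integrable_on_approx_dominated:
  fixes f :: "real \<Rightarrow> 'b::banach"
  assumes approx: "\<And>e. e > 0 \<Longrightarrow> \<exists>g h. g integrable_on {a..b} \<and> h integrable_on {a..b} \<and>
        (\<forall>x\<in>{a..b}. norm (f x - g x) \<le> h x) \<and> integral {a..b} h < e"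
  shows "f integrable_on {a..b}"
proof -
  have "f integrable_on cbox a b"
    unfolding integrable_Cauchy
  proof (intro allI impI)
    fix e :: real assume e: "e > 0"
    obtain g h where g: "g integrable_on {a..b}" and h: "h integrable_on {a..b}"
      and le: "\<forall>x\<in>{a..b}. norm (f x - g x) \<le> h x" and small: "integral {a..b} h < e/4"
      using approx[of "e/4"] e by auto
    have e4: "e/4 > 0"
      using e by simp
    obtain \<gamma> where "gauge \<gamma>" and near: "\<And>D. D tagged_division_of cbox a b \<Longrightarrow> \<gamma> fine D \<Longrightarrow>
        norm ((\<Sum>(x,K)\<in>D. content K *\<^sub>R f x) - integral {a..b} g) < integral {a..b} h + e/4"
      using riemann_sum_near_integral_of_dominated_approx[OF g h le[rule_format] e4] by blast
    show "\<exists>\<gamma>. gauge \<gamma> \<and> (\<forall>D1 D2. D1 tagged_division_of cbox a b \<and> \<gamma> fine D1 \<and>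
        D2 tagged_division_of cbox a b \<and> \<gamma> fine D2 \<longrightarrow>
        norm ((\<Sum>(x,K)\<in>D1. content K *\<^sub>R f x) - (\<Sum>(x,K)\<in>D2. content K *\<^sub>R f x)) < e)"
    proof (intro exI conjI allI impI)
      show "gauge \<gamma>"
        by fact
      fix D1 D2
      assume D: "D1 tagged_division_of cbox a b \<and> \<gamma> fine D1 \<and> D2 tagged_division_of cbox a b \<and> \<gamma> fine D2"
      have d1: "norm ((\<Sum>(x,K)\<in>D1. content K *\<^sub>R f x) - integral {a..b} g) < e/2"
        using near[of D1] D small by linarith
      have "norm ((\<Sum>(x,K)\<in>D2. content K *\<^sub>R f x) - integral {a..b} g) < e/2"
        using near[of D2] D small by linarith
      then have d2: "norm (integral {a..b} g - (\<Sum>(x,K)\<in>D2. content K *\<^sub>R f x)) < e/2"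
        by (simp add: norm_minus_commute)
      from norm_diff_triangle_less[OF d1 d2]
      show "norm ((\<Sum>(x,K)\<in>D1. content K *\<^sub>R f x) - (\<Sum>(x,K)\<in>D2. content K *\<^sub>R f x)) < e"
        by simp
    qed
  qed
  then show ?thesis
    by simp
qed

lemma foldr_first_match:
  "\<exists>z\<in>set zs. P z s \<Longrightarrow>
    \<exists>z\<in>set zs. P z s \<and> foldr (\<lambda>z r. if P z s then c z s else r) zs 0 = c z s"
  by (induction zs) auto

lemma integrable_on_foldr_first_match:
  fixes c :: "'c \<Rightarrow> real \<Rightarrow> 'b::banach"
  assumes meas: "\<And>z. z \<in> set zs \<Longrightarrow> {s\<in>{a..b}. P z s} \<in> sets lebesgue"
    and pieces: "\<And>z E. z \<in> set zs \<Longrightarrow> E \<in> sets lebesgue \<Longrightarrow>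
        (\<lambda>s. indicator E s *\<^sub>R c z s) integrable_on {a..b}"
    and M: "M \<in> sets lebesgue"
  shows "(\<lambda>s. indicator M s *\<^sub>R foldr (\<lambda>z r. if P z s then c z s else r) zs 0) integrable_on {a..b}"
  using meas pieces M
proof (induction zs arbitrary: M)
  case Nil
  then show ?case by (simp add: integrable_0)
next
  case (Cons z zs)
  define A where "A = {s\<in>{a..b}. P z s}"
  have A: "A \<in> sets lebesgue"
    using Cons.prems(1) by (simp add: A_def)
  have "(\<lambda>s. indicator (M \<inter> A) s *\<^sub>R c z s) integrable_on {a..b}"
    using Cons.prems(2,3) A by simp
  moreover have "(\<lambda>s. indicator (M - A) s *\<^sub>R foldr (\<lambda>z r. if P z s then c z s else r) zs 0)
      integrable_on {a..b}"
    using Cons.prems A by (intro Cons.IH) auto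
  ultimately have "(\<lambda>s. indicator (M \<inter> A) s *\<^sub>R c z s +
      indicator (M - A) s *\<^sub>R foldr (\<lambda>z r. if P z s then c z s else r) zs 0) integrable_on {a..b}"
    by (rule integrable_add)
  then show ?case
  proof (rule integrable_eq)
    fix s
    show "indicator (M \<inter> A) s *\<^sub>R c z s +
        indicator (M - A) s *\<^sub>R foldr (\<lambda>z r. if P z s then c z s else r) zs 0 =
        indicator M s *\<^sub>R foldr (\<lambda>z r. if P z s then c z s else r) (z # zs) 0"
      if "s \<in> {a..b}"
      using that by (cases "s \<in> M"; cases "P z s") (simp_all add: A_def indicator_def)
  qed
qed

lemma integral_tail_less:
  fixes f :: "real \<Rightarrow> real"
  assumes f: "f integrable_on {a..b}" and ab: "a < b" and e: "e > 0"
  obtains c where "c \<in> {a..<b}" "integral {c..b} f < e"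
proof -
  have "continuous_on {a..b} (\<lambda>x. integral {x..b} f)"
    by (rule indefinite_integral_continuous_1'[OF f])
  moreover have "b \<in> {a..b}"
    using ab by simp
  ultimately obtain d where "d > 0" and d: "\<forall>x\<in>{a..b}. dist x b < d \<longrightarrow>
      dist (integral {x..b} f) (integral {b..b} f) < e"
    using e unfolding continuous_on_iff by blast
  define c where "c = max a (b - d/2)"
  have "c \<in> {a..<b}" "dist c b < d"
    using ab \<open>d > 0\<close> by (auto simp: c_def dist_real_def)
  with d that show thesis
    by auto
qed

lemma Caratheodory_approximation:
  fixes \<Phi> :: "real \<Rightarrow> 'a::real_normed_vector \<Rightarrow> 'b::banach" and g :: "real \<Rightarrow> 'a"
  assumes C: "compact C" and g_C: "\<And>s. s \<in> {a..b} \<Longrightarrow> g s \<in> C"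
    and g_meas: "\<And>G. open G \<Longrightarrow> {s\<in>{a..b}. g s \<in> G} \<in> sets lebesgue"
    and pieces: "\<And>z E. E \<in> sets lebesgue \<Longrightarrow> (\<lambda>s. indicator E s *\<^sub>R \<Phi> s z) integrable_on {a..b}"
    and lin: "\<And>s. s \<in> {a..b} \<Longrightarrow> linear (\<Phi> s)"
    and bound: "\<And>s x. s \<in> {a..b} \<Longrightarrow> norm (\<Phi> s x) \<le> \<rho> s * norm x"
    and \<rho>_nonneg: "\<And>s. s \<in> {a..b} \<Longrightarrow> 0 \<le> \<rho> s"
    and \<delta>: "\<delta> > 0"
  obtains p where "p integrable_on {a..b}" "\<And>s. s \<in> {a..b} \<Longrightarrow> norm (\<Phi> s (g s) - p s) \<le> \<rho> s * \<delta>"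
proof -
  have "C \<subseteq> (\<Union>z\<in>C. ball z \<delta>)"
    using \<delta> by auto
  then obtain Z where "finite Z" and Z: "C \<subseteq> (\<Union>z\<in>Z. ball z \<delta>)"
    by (meson compactE_image[OF C] open_ball)
  then obtain zs where zs: "set zs = Z"
    using finite_list by blast
  define p where "p s = foldr (\<lambda>z r. if g s \<in> ball z \<delta> then \<Phi> s z else r) zs 0" for s
  have "(\<lambda>s. indicator UNIV s *\<^sub>R p s) integrable_on {a..b}"
    unfolding p_def
  proof (rule integrable_on_foldr_first_match[where P = "\<lambda>z s. g s \<in> ball z \<delta>" and c = "\<lambda>z s. \<Phi> s z"])
    show "{s\<in>{a..b}. g s \<in> ball z \<delta>} \<in> sets lebesgue" for z
      by (rule g_meas) simp
  qed (simp_all add: pieces)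
  moreover have "norm (\<Phi> s (g s) - p s) \<le> \<rho> s * \<delta>" if s: "s \<in> {a..b}" for s
  proof -
    have "\<exists>z\<in>set zs. g s \<in> ball z \<delta>"
      using Z zs g_C[OF s] by blast
    then obtain z where z: "g s \<in> ball z \<delta>" and "p s = \<Phi> s z"
      using foldr_first_match[of zs "\<lambda>z s. g s \<in> ball z \<delta>" s "\<lambda>z s. \<Phi> s z"] by (auto simp: p_def)
    then have "norm (\<Phi> s (g s) - p s) = norm (\<Phi> s (g s - z))"
      using lin[OF s] by (simp add: linear_diff)
    also have "\<dots> \<le> \<rho> s * norm (g s - z)"
      by (rule bound[OF s])
    also have "\<dots> \<le> \<rho> s * \<delta>"
      using z \<rho>_nonneg[OF s] by (intro mult_left_mono) (auto simp: dist_norm norm_minus_commute)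
    finally show ?thesis .
  qed
  ultimately show thesis
    using that by simp
qed

lemma integrable_on_Caratheodory:
  fixes \<Phi> :: "real \<Rightarrow> 'a::real_normed_vector \<Rightarrow> 'b::banach" and g :: "real \<Rightarrow> 'a"
  assumes C: "compact C" and g_C: "\<And>s. s \<in> {a..b} \<Longrightarrow> g s \<in> C"
    and g_meas: "\<And>G c. open G \<Longrightarrow> c \<le> b \<Longrightarrow> {s\<in>{a..c}. g s \<in> G} \<in> sets lebesgue"
    and pieces: "\<And>z E c. E \<in> sets lebesgue \<Longrightarrow> c \<in> {a..<b} \<Longrightarrow>
        (\<lambda>s. indicator E s *\<^sub>R \<Phi> s z) integrable_on {a..c}"
    and lin: "\<And>s. s \<in> {a..b} \<Longrightarrow> linear (\<Phi> s)"
    and bound: "\<And>s x. s \<in> {a..b} \<Longrightarrow> norm (\<Phi> s x) \<le> \<rho> s * norm x"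
    and \<rho>_nonneg: "\<And>s. s \<in> {a..b} \<Longrightarrow> 0 \<le> \<rho> s"
    and \<rho>: "\<rho> integrable_on {a..b}"
  shows "(\<lambda>s. \<Phi> s (g s)) integrable_on {a..b}"
proof (cases "a < b")
  case False
  then have "content (cbox a b) = 0"
    by simp
  then show ?thesis
    using integrable_on_null[of a b] by simp
next
  case True
  obtain M where M: "M > 0" "\<And>x. x \<in> C \<Longrightarrow> norm x \<le> M"
    using compact_imp_bounded[OF C] unfolding bounded_pos by blast
  show ?thesis
  proof (rule integrable_on_approx_dominated)
    fix e :: real assume e: "e > 0"
    obtain c where c: "c \<in> {a..<b}" and tail: "integral {c..b} \<rho> < e / (2 * M)"
      using integral_tail_less[OF \<rho> True, of "e / (2 * M)"] e M(1) by auto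
    have int_\<rho>: "0 \<le> integral {a..b} \<rho>"
      using \<rho> \<rho>_nonneg by (rule integral_nonneg)
    define \<delta> where "\<delta> = e / (2 * (integral {a..b} \<rho> + 1))"
    have \<delta>: "\<delta> > 0" "\<delta> * integral {a..b} \<rho> < e/2"
      using e int_\<rho> by (simp_all add: \<delta>_def field_simps)
    obtain q where q: "q integrable_on {a..c}"
      and q_approx: "\<And>s. s \<in> {a..c} \<Longrightarrow> norm (\<Phi> s (g s) - q s) \<le> \<rho> s * \<delta>"
    proof -
      have "\<exists>q. q integrable_on {a..c} \<and> (\<forall>s\<in>{a..c}. norm (\<Phi> s (g s) - q s) \<le> \<rho> s * \<delta>)"
        by (rule Caratheodory_approximation[OF C, of a c g \<Phi> \<rho> \<delta>])
          (use c g_C g_meas pieces lin bound \<rho>_nonneg \<delta>(1) in auto)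
      then show thesis
        using that by blast
    qed
    define p where "p s = (if s \<in> {a..c} then q s else 0)" for s
    define h where "h s = \<delta> * \<rho> s + (if s \<in> {c..b} then M * \<rho> s else 0)" for s
    have "p integrable_on {a..b}"
      using c q unfolding p_def integrable_restrict_Int by (simp add: Int_absorb2)
    moreover have "((\<lambda>s. if s \<in> {c..b} then M * \<rho> s else 0) has_integral M * integral {c..b} \<rho>) {a..b}"
      unfolding has_integral_restrict_Int
      using c has_integral_mult_right[OF integrable_integral[OF integrable_subinterval_real[OF \<rho>]], of c b M]
      by (simp add: Int_absorb2)
    then have h: "(h has_integral \<delta> * integral {a..b} \<rho> + M * integral {c..b} \<rho>) {a..b}"
      unfolding h_def using has_integral_mult_right[OF integrable_integral[OF \<rho>]]
      by (intro has_integral_add) auto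
    moreover have "integral {a..b} h < e"
      using h \<delta>(2) tail M(1) by (simp add: integral_unique field_simps)
    moreover have "norm (\<Phi> s (g s) - p s) \<le> h s" if s: "s \<in> {a..b}" for s
    proof (cases "s \<le> c")
      case True
      have "0 \<le> M * \<rho> s"
        using M(1) \<rho>_nonneg[OF s] by simp
      then show ?thesis
        using q_approx[of s] True s by (auto simp: p_def h_def mult.commute)
    next
      case False
      have "norm (\<Phi> s (g s)) \<le> \<rho> s * M"
        using bound[OF s] M(2)[OF g_C[OF s]] \<rho>_nonneg[OF s] by (meson mult_left_mono order_trans)
      moreover have "0 \<le> \<delta> * \<rho> s"
        using \<delta>(1) \<rho>_nonneg[OF s] by simp
      ultimately show ?thesis
        using False s by (simp add: p_def h_def mult.commute)
    qed
    ultimately show "\<exists>p h. p integrable_on {a..b} \<and> h integrable_on {a..b} \<and>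
        (\<forall>s\<in>{a..b}. norm (\<Phi> s (g s) - p s) \<le> h s) \<and> integral {a..b} h < e"
      using has_integral_integrable by blast
  qed
qed

lemma integrable_on_indicator_scaleR_continuous:
  fixes c :: "real \<Rightarrow> 'b::banach"
  assumes E: "E \<in> sets lebesgue" and c: "continuous_on {a..b} c"
  shows "(\<lambda>s. indicator E s *\<^sub>R c s) integrable_on {a..b}"
proof -
  have "(\<lambda>s. id (indicator E s *\<^sub>R c s)) integrable_on {a..b}"
  proof (rule integrable_on_Caratheodory[where \<Phi> = "\<lambda>_. id" and g = "\<lambda>s. indicator E s *\<^sub>R c s"
        and C = "insert 0 (c ` {a..b})" and \<rho> = "\<lambda>_. 1"])
    show "compact (insert 0 (c ` {a..b}))"
      using compact_continuous_image[OF c compact_Icc] by (rule compact_insert)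
    show "indicator E s *\<^sub>R c s \<in> insert 0 (c ` {a..b})" if "s \<in> {a..b}" for s
      using that by (simp add: indicator_def)
    show "{s\<in>{a..d}. indicator E s *\<^sub>R c s \<in> G} \<in> sets lebesgue" if G: "open G" and d: "d \<le> b" for G d
    proof -
      obtain A where A: "open A" "A \<inter> {a..b} = c -` G \<inter> {a..b}"
        using c G unfolding continuous_on_open_invariant by blast
      have "{s\<in>{a..d}. indicator E s *\<^sub>R c s \<in> G} =
          (E \<inter> (A \<inter> {a..d})) \<union> (if 0 \<in> G then {a..d} - E else {})"
      proof (intro set_eqI)
        fix s
        have "s \<in> A \<inter> {a..b} \<longleftrightarrow> s \<in> c -` G \<inter> {a..b}"
          by (simp only: A(2))
        then have "s \<in> {a..d} \<Longrightarrow> s \<in> A \<longleftrightarrow> c s \<in> G"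
          using d by auto
        then show "s \<in> {s\<in>{a..d}. indicator E s *\<^sub>R c s \<in> G} \<longleftrightarrow>
            s \<in> (E \<inter> (A \<inter> {a..d})) \<union> (if 0 \<in> G then {a..d} - E else {})"
          by (cases "s \<in> E"; cases "s \<in> {a..d}"; cases "0 \<in> G") (auto simp: indicator_def)
      qed
      also have "\<dots> \<in> sets lebesgue"
        using E A(1) by (intro sets.Un sets.Int) (auto intro: sets.Diff)
      finally show ?thesis .
    qed
    show "(\<lambda>s. indicator E' s *\<^sub>R id z) integrable_on {a..d}" if "E' \<in> sets lebesgue" for z E' d
    proof -
      have "E' \<inter> {a..d} \<in> lmeasurable"
        using that by (intro bounded_set_imp_lmeasurable) (auto intro: bounded_subset[of "{a..d}"])
      then show ?thesis
        by (simp add: integrable_on_indicator integrable_on_scaleR_left)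
    qed
  qed (simp_all add: linear_id integrable_const_ivl)
  then show ?thesis
    by simp
qed

lemma sets_lebesgue_preimage_open:
  fixes a b c d :: real
  assumes f: "f \<in> borel_measurable (restrict_space lebesgue {a..b})" and G: "open G"
    and sub: "{c..d} \<subseteq> {a..b}"
  shows "{s\<in>{c..d}. f s \<in> G} \<in> sets lebesgue"
proof -
  have "f -` G \<inter> space (restrict_space lebesgue {a..b}) \<in> sets (restrict_space lebesgue {a..b})"
    using G by (intro measurable_sets[OF f]) simp
  then have "f -` G \<inter> {a..b} \<in> sets lebesgue"
    by (auto simp: sets_restrict_space_iff space_restrict_space)
  then have "{c..d} \<inter> (f -` G \<inter> {a..b}) \<in> sets lebesgue"
    by (rule sets.Int[rotated]) simp
  moreover have "{c..d} \<inter> (f -` G \<inter> {a..b}) = {s\<in>{c..d}. f s \<in> G}"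
    using sub by auto
  ultimately show ?thesis
    by simp
qed

lemma compact_valued_modification:
  fixes f :: "real \<Rightarrow> 'a::real_normed_vector"
  assumes f: "f \<in> borel_measurable (restrict_space lebesgue {a..b})"
    and ae: "AE s in lebesgue. s \<in> {a..b} \<longrightarrow> f s \<in> F"
  obtains N g where "negligible N" "\<And>s. s \<in> {a..b} - N \<Longrightarrow> g s = f s"
    "\<And>s. g s \<in> insert 0 (closure F)"
    "\<And>G c. open G \<Longrightarrow> c \<le> b \<Longrightarrow> {s\<in>{a..c}. g s \<in> G} \<in> sets lebesgue"
proof -
  define g where "g s = (if s \<in> f -` closure F then f s else 0)" for s
  have "f -` closure F \<inter> space (restrict_space lebesgue {a..b}) \<in> sets (restrict_space lebesgue {a..b})"
    by (intro measurable_sets[OF f]) simp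
  then have "g \<in> borel_measurable (restrict_space lebesgue {a..b})"
    unfolding g_def by (intro measurable_If_set[OF f]) simp_all
  then have "{s\<in>{a..c}. g s \<in> G} \<in> sets lebesgue" if "open G" "c \<le> b" for G c
    using that by (intro sets_lebesgue_preimage_open) auto
  moreover obtain N where N: "negligible N" "{s. \<not> (s \<in> {a..b} \<longrightarrow> f s \<in> F)} \<subseteq> N"
    using ae unfolding eventually_ae_filter_negligible by blast
  moreover have "g s = f s" if "s \<in> {a..b} - N" for s
    using that N(2) closure_subset by (auto simp: g_def)
  ultimately show thesis
    using that[of N g] by (simp add: g_def)
qed

section \<open>Smoothing evolution families\<close>

lemma eventually_uniformly_small_on_compact:
  fixes D :: "nat \<Rightarrow> 'i \<Rightarrow> 'a::real_normed_vector \<Rightarrow> 'b::real_normed_vector"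
  assumes C: "compact C" and dense: "C \<subseteq> closure S"
    and lin: "\<And>n j. j \<in> J \<Longrightarrow> linear (D n j)"
    and bound: "\<And>n j x. j \<in> J \<Longrightarrow> norm (D n j x) \<le> \<rho> j * norm x"
    and \<rho>_nonneg: "\<And>j. j \<in> J \<Longrightarrow> 0 \<le> \<rho> j"
    and conv: "\<And>y. y \<in> S \<Longrightarrow> uniform_limit J (\<lambda>n j. D n j y) (\<lambda>j. 0) sequentially"
    and \<epsilon>: "\<epsilon> > 0"
  shows "\<forall>\<^sub>F n in sequentially. \<forall>j\<in>J. \<forall>x\<in>C. norm (D n j x) \<le> \<epsilon> * \<rho> j + \<epsilon>"
proof -
  have "C \<subseteq> (\<Union>y\<in>S. ball y \<epsilon>)"
  proof
    fix x assume "x \<in> C"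
    then obtain y where "y \<in> S" "dist y x < \<epsilon>"
      using dense \<epsilon> closure_approachable by blast
    then show "x \<in> (\<Union>y\<in>S. ball y \<epsilon>)"
      by auto
  qed
  then obtain Y where "Y \<subseteq> S" "finite Y" and Y: "C \<subseteq> (\<Union>y\<in>Y. ball y \<epsilon>)"
    by (meson compactE_image[OF C] open_ball)
  moreover have "\<forall>y\<in>Y. \<forall>\<^sub>F n in sequentially. \<forall>j\<in>J. norm (D n j y) < \<epsilon>"
    using conv \<epsilon> \<open>Y \<subseteq> S\<close> unfolding uniform_limit_iff by (auto simp: dist_norm)
  ultimately have "\<forall>\<^sub>F n in sequentially. \<forall>y\<in>Y. \<forall>j\<in>J. norm (D n j y) < \<epsilon>"
    by (intro eventually_ball_finite)
  then show ?thesis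
  proof (rule eventually_mono, intro ballI)
    fix n j x
    assume small: "\<forall>y\<in>Y. \<forall>j\<in>J. norm (D n j y) < \<epsilon>" and j: "j \<in> J" and x: "x \<in> C"
    then obtain y where y: "y \<in> Y" "dist y x < \<epsilon>"
      using Y by auto
    have "norm (D n j x) \<le> norm (D n j (x - y)) + norm (D n j y)"
      using linear_diff[OF lin[OF j]] norm_triangle_ineq[of "D n j (x - y)" "D n j y"]
      by simp
    also have "\<dots> \<le> \<rho> j * \<epsilon> + \<epsilon>"
    proof (rule add_mono)
      have "norm (D n j (x - y)) \<le> \<rho> j * norm (x - y)"
        by (rule bound[OF j])
      also have "\<dots> \<le> \<rho> j * \<epsilon>"
        using y(2) \<rho>_nonneg[OF j] by (intro mult_left_mono) (auto simp: dist_norm norm_minus_commute)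
      finally show "norm (D n j (x - y)) \<le> \<rho> j * \<epsilon>" .
      show "norm (D n j y) \<le> \<epsilon>"
        using small y(1) j by (simp add: less_imp_le)
    qed
    finally show "norm (D n j x) \<le> \<epsilon> * \<rho> j + \<epsilon>"
      by (simp add: mult.commute)
  qed
qed

lemma linear_factor_through_inj:
  assumes i: "linear i" "inj i" and u: "linear u" and factor: "\<And>x. i (v x) = u x"
  shows "linear v"
proof (rule linearI)
  show "v (x + y) = v x + v y" for x y
    by (rule injD[OF i(2)]) (simp add: factor linear_add[OF i(1)] linear_add[OF u])
  show "v (r *\<^sub>R x) = r *\<^sub>R v x" for r x
    by (rule injD[OF i(2)]) (simp add: factor linear_scale[OF i(1)] linear_scale[OF u])
qed

lemma has_integral_powr_reflected:
  fixes \<alpha> t :: real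
  assumes "0 < \<alpha>" "\<alpha> < 1" "0 \<le> t"
  shows "((\<lambda>s. (t - s) powr (-\<alpha>)) has_integral (t powr (1 - \<alpha>) / (1 - \<alpha>))) {0..t}"
proof -
  have "((\<lambda>x. x powr (-\<alpha>)) has_integral (t powr (-\<alpha>+1) / (-\<alpha>+1))) (cbox 0 t)"
    using has_integral_powr_from_0[of "-\<alpha>" t] assms by simp
  from has_integral_affinity[OF this, of "-1" t]
  have "((\<lambda>x. (-x + t) powr (-\<alpha>)) has_integral (t powr (-\<alpha>+1) / (-\<alpha>+1))) ((\<lambda>x. -x + t) ` {0..t})"
    by simp
  moreover have "(\<lambda>x. -x + t) ` {0..t} = {0..t}"
    by (auto simp: image_iff intro!: bexI[of _ "t - _"])
  ultimately show ?thesis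
    by (simp add: algebra_simps)
qed

locale smoothing_evolution_family =
  fixes i :: "'b::banach \<Rightarrow> 'a::banach"
    and U :: "nat \<Rightarrow> real \<Rightarrow> real \<Rightarrow> 'a \<Rightarrow> 'a"
    and V :: "nat \<Rightarrow> real \<Rightarrow> real \<Rightarrow> 'a \<Rightarrow> 'b"
    and \<alpha> K :: real
  assumes alpha: "0 < \<alpha>" "\<alpha> < 1"
    and i: "bounded_linear i" "inj i"
    and evol: "\<And>n. evolution_system (U n)"
    and smooth: "\<And>n t s x. 0 \<le> s \<Longrightarrow> s < t \<Longrightarrow> i (V n t s x) = U n t s x"
    and K: "0 \<le> K"
    and V_bound: "\<And>n t s x. 0 \<le> s \<Longrightarrow> s < t \<Longrightarrow>
        norm (V n t s x) \<le> K * (1 + (t - s) powr (- \<alpha>)) * norm x"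
begin

definition weight :: "real \<Rightarrow> real \<Rightarrow> real" where
  "weight t s = 1 + (t - s) powr (- \<alpha>)"

lemma weight_nonneg: "0 \<le> weight t s"
  by (simp add: weight_def add_nonneg_nonneg)

lemma has_integral_weight:
  "0 \<le> t \<Longrightarrow> (weight t has_integral t + t powr (1 - \<alpha>) / (1 - \<alpha>)) {0..t}"
  unfolding weight_def
  using has_integral_add[OF has_integral_const_real[of 1 0 t] has_integral_powr_reflected[OF alpha]]
  by simp

lemma integral_weight_le:
  assumes "0 \<le> t" "t \<le> T"
  shows "integral {0..t} (weight t) \<le> T + T powr (1 - \<alpha>) / (1 - \<alpha>)"
proof -
  have "t powr (1 - \<alpha>) \<le> T powr (1 - \<alpha>)"
    using assms alpha by (intro powr_mono2) auto
  then have "t powr (1 - \<alpha>) / (1 - \<alpha>) \<le> T powr (1 - \<alpha>) / (1 - \<alpha>)"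
    using alpha by (intro divide_right_mono) auto
  then show ?thesis
    using integral_unique[OF has_integral_weight[OF assms(1)]] assms(2) by linarith
qed

lemma V_bounded_linear:
  assumes "0 \<le> s" "s < t"
  shows "bounded_linear (V n t s)"
proof -
  have "bounded_linear (U n t s)"
    using evol[of n] assms unfolding evolution_system_def by simp
  then have "linear (V n t s)"
    using assms i by (intro linear_factor_through_inj[of i "U n t s"])
      (auto simp: smooth bounded_linear.linear)
  then show ?thesis
    using V_bound[OF assms]
    by (intro bounded_linear_intro[where K = "K * (1 + (t - s) powr (- \<alpha>))"])
      (auto simp: linear_add linear_scale mult.commute)
qed

lemma V_eq_V_U:
  assumes "0 \<le> s" "s \<le> r" "r < t"
  shows "V n t s x = V n t r (U n r s x)"
proof (rule injD[OF i(2)])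
  have "\<forall>t r s. 0 \<le> s \<and> s \<le> r \<and> r \<le> t \<longrightarrow> U n t r \<circ> U n r s = U n t s"
    using evol[of n] unfolding evolution_system_def by blast
  then have "U n t r \<circ> U n r s = U n t s"
    using assms by simp
  then have "U n t r (U n r s x) = U n t s x"
    by (simp add: fun_eq_iff)
  then show "i (V n t s x) = i (V n t r (U n r s x))"
    using assms by (simp add: smooth)
qed

lemma V_continuous_on:
  assumes "0 \<le> c" "c < t"
  shows "continuous_on {0..c} (\<lambda>s. V n t s x)"
proof -
  have "continuous_on {(t, s). 0 \<le> s \<and> s \<le> t} (\<lambda>(t, s). U n t s x)"
    using evol[of n] unfolding evolution_system_def by blast
  moreover have "continuous_on {0..c} (\<lambda>s. (c, s))"
    by (intro continuous_intros)
  ultimately have "continuous_on {0..c} (\<lambda>s. (\<lambda>(t, s). U n t s x) (c, s))"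
    by (rule continuous_on_compose2) auto
  then have "continuous_on {0..c} (\<lambda>s. U n c s x)"
    by simp
  then have "continuous_on {0..c} (\<lambda>s. V n t c (U n c s x))"
    by (rule bounded_linear.continuous_on[OF V_bounded_linear[OF assms]])
  then show ?thesis
    by (rule continuous_on_cong[THEN iffD1, rotated 2]) (use assms V_eq_V_U in auto)
qed

text \<open>The value at \<open>s = t\<close>, where \<open>V\<close> is unconstrained, is set to \<open>0\<close>.\<close>
definition V_diff :: "nat \<Rightarrow> real \<Rightarrow> real \<Rightarrow> 'a \<Rightarrow> 'b" where
  "V_diff n t s x = (if s < t then V n t s x - V 0 t s x else 0)"

lemma linear_V_diff: "0 \<le> s \<Longrightarrow> linear (V_diff n t s)"
  unfolding V_diff_def
  by (cases "s < t") (auto intro: linear_compose_sub bounded_linear.linear V_bounded_linear)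

lemma norm_V_diff_le:
  assumes "0 \<le> s"
  shows "norm (V_diff n t s x) \<le> 2 * K * weight t s * norm x"
proof (cases "s < t")
  case True
  have "norm (V n t s x - V 0 t s x) \<le> norm (V n t s x) + norm (V 0 t s x)"
    by (rule norm_triangle_ineq4)
  also have "\<dots> \<le> 2 * K * weight t s * norm x"
    using V_bound[OF assms True, of n x] V_bound[OF assms True, of 0 x] by (simp add: weight_def)
  finally show ?thesis
    using True by (simp add: V_diff_def)
next
  case False
  then show ?thesis
    using K weight_nonneg by (simp add: V_diff_def)
qed

lemma integrable_on_V_diff:
  assumes t: "0 \<le> t" and C: "compact C" and g_C: "\<And>s. s \<in> {0..t} \<Longrightarrow> g s \<in> C"
    and g_meas: "\<And>G c. open G \<Longrightarrow> c \<le> t \<Longrightarrow> {s\<in>{0..c}. g s \<in> G} \<in> sets lebesgue"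
  shows "(\<lambda>s. V_diff n t s (g s)) integrable_on {0..t}"
proof (rule integrable_on_Caratheodory[OF C g_C g_meas])
  show "(\<lambda>s. indicator E s *\<^sub>R V_diff n t s z) integrable_on {0..c}"
    if E: "E \<in> sets lebesgue" and c: "c \<in> {0..<t}" for z E c
  proof -
    have "continuous_on {0..c} (\<lambda>s. V n t s z - V 0 t s z)"
      using c by (intro continuous_on_diff V_continuous_on) auto
    then have "(\<lambda>s. indicator E s *\<^sub>R (V n t s z - V 0 t s z)) integrable_on {0..c}"
      by (rule integrable_on_indicator_scaleR_continuous[OF E])
    then show ?thesis
      by (rule integrable_eq) (use c in \<open>simp add: V_diff_def\<close>)
  qed
  show "(\<lambda>s. 2 * K * weight t s) integrable_on {0..t}"
    using has_integral_weight[OF t] by (intro integrable_on_mult_right) blast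
  show "linear (V_diff n t s)" "norm (V_diff n t s x) \<le> 2 * K * weight t s * norm x"
    "0 \<le> 2 * K * weight t s" if "s \<in> {0..t}" for s x
    using that K weight_nonneg linear_V_diff norm_V_diff_le by simp_all
qed

lemma eventually_norm_V_diff_le:
  assumes C: "compact C" and dense: "C \<subseteq> closure (range i)"
    and conv: "\<And>y \<epsilon>. \<epsilon> > 0 \<Longrightarrow> \<exists>N. \<forall>n\<ge>N. \<forall>t s. 0 \<le> s \<and> s < t \<and> t \<le> T \<longrightarrow>
        norm (V n t s (i y) - V 0 t s (i y)) < \<epsilon>"
    and \<epsilon>: "\<epsilon> > 0"
  shows "\<forall>\<^sub>F n in sequentially. \<forall>t s x. 0 \<le> s \<and> s \<le> t \<and> t \<le> T \<and> x \<in> C \<longrightarrow>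
      norm (V_diff n t s x) \<le> \<epsilon> * (2 * K * weight t s + 1)"
proof -
  define J where "J = {j. 0 \<le> snd j \<and> snd j < fst j \<and> fst j \<le> T}"
  have "\<forall>\<^sub>F n in sequentially. \<forall>j\<in>J. \<forall>x\<in>C.
      norm (V_diff n (fst j) (snd j) x) \<le> \<epsilon> * (2 * K * weight (fst j) (snd j)) + \<epsilon>"
  proof (rule eventually_uniformly_small_on_compact[OF C dense _ _ _ _ \<epsilon>])
    show "linear (V_diff n (fst j) (snd j))" if "j \<in> J" for n j
      using that linear_V_diff by (simp add: J_def)
    show "norm (V_diff n (fst j) (snd j) x) \<le> 2 * K * weight (fst j) (snd j) * norm x"
      if "j \<in> J" for n j x
      using that norm_V_diff_le by (simp add: J_def)
    show "0 \<le> 2 * K * weight (fst j) (snd j)" for j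
      using K weight_nonneg by simp
    show "uniform_limit J (\<lambda>n j. V_diff n (fst j) (snd j) y) (\<lambda>j. 0) sequentially"
      if "y \<in> range i" for y
      using that conv unfolding uniform_limit_iff eventually_sequentially
      by (auto simp: J_def V_diff_def dist_norm)
  qed
  then show ?thesis
  proof (rule eventually_mono, intro allI impI)
    fix n t s x
    assume small: "\<forall>j\<in>J. \<forall>x\<in>C.
        norm (V_diff n (fst j) (snd j) x) \<le> \<epsilon> * (2 * K * weight (fst j) (snd j)) + \<epsilon>"
      and "0 \<le> s \<and> s \<le> t \<and> t \<le> T \<and> x \<in> C"
    then show "norm (V_diff n t s x) \<le> \<epsilon> * (2 * K * weight t s + 1)"
      using \<epsilon> K weight_nonneg[of t s] small[rule_format, of "(t, s)" x]
      by (cases "s < t") (simp_all add: J_def V_diff_def algebra_simps)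
  qed
qed

lemma V_sub_ae_eq_V_diff:
  assumes t: "0 \<le> t" "t \<le> T" and F: "compact (closure F)"
    and f: "f \<in> borel_measurable (restrict_space lebesgue {0..T})"
    and ae: "AE s in lebesgue. s \<in> {0..T} \<longrightarrow> f s \<in> F"
  obtains g where "\<And>s. g s \<in> insert 0 (closure F)"
    and "(\<lambda>s. V_diff n t s (g s)) integrable_on {0..t}"
    and "\<And>I. ((\<lambda>s. V n t s (f s) - V 0 t s (f s)) has_integral I) {0..t} \<longleftrightarrow>
        ((\<lambda>s. V_diff n t s (g s)) has_integral I) {0..t}"
proof -
  obtain N g where N: "negligible N" and g_f: "\<And>s. s \<in> {0..T} - N \<Longrightarrow> g s = f s"
    and g_C: "\<And>s. g s \<in> insert 0 (closure F)"
    and g_meas: "\<And>G c. open G \<Longrightarrow> c \<le> T \<Longrightarrow> {s\<in>{0..c}. g s \<in> G} \<in> sets lebesgue"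
    using compact_valued_modification[OF f ae] by blast
  have "(\<lambda>s. V_diff n t s (g s)) integrable_on {0..t}"
    using F g_meas t(2) by (intro integrable_on_V_diff[OF t(1) _ g_C]) auto
  moreover have "V_diff n t s (g s) = V n t s (f s) - V 0 t s (f s)" if "s \<in> {0..t} - (N \<union> {t})" for s
    using that g_f t by (simp add: V_diff_def)
  then have "((\<lambda>s. V n t s (f s) - V 0 t s (f s)) has_integral I) {0..t} \<longleftrightarrow>
      ((\<lambda>s. V_diff n t s (g s)) has_integral I) {0..t}" for I
    using N by (intro has_integral_spike_eq[of "N \<union> {t}"]) auto
  ultimately show thesis
    using that g_C by blast
qed

lemma integrable_on_V_sub:
  assumes t: "0 \<le> t" "t \<le> T" and F: "compact (closure F)"
    and f: "f \<in> borel_measurable (restrict_space lebesgue {0..T})"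
    and ae: "AE s in lebesgue. s \<in> {0..T} \<longrightarrow> f s \<in> F"
  shows "(\<lambda>s. V n t s (f s) - V 0 t s (f s)) integrable_on {0..t}"
  by (rule V_sub_ae_eq_V_diff[OF t F f ae, where n = n]) (auto simp: integrable_on_def)

lemma norm_integral_V_sub_le:
  assumes t: "0 \<le> t" "t \<le> T" and F: "compact (closure F)"
    and f: "f \<in> borel_measurable (restrict_space lebesgue {0..T})"
    and ae: "AE s in lebesgue. s \<in> {0..T} \<longrightarrow> f s \<in> F"
    and small: "\<And>s x. 0 \<le> s \<Longrightarrow> s \<le> t \<Longrightarrow> x \<in> insert 0 (closure F) \<Longrightarrow>
        norm (V_diff n t s x) \<le> A * weight t s + B"
    and A: "0 \<le> A" and B: "0 \<le> B"
  shows "norm (integral {0..t} (\<lambda>s. V n t s (f s) - V 0 t s (f s)))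
      \<le> A * (T + T powr (1 - \<alpha>) / (1 - \<alpha>)) + B * T"
proof -
  obtain g where g_C: "\<And>s. g s \<in> insert 0 (closure F)"
    and int: "(\<lambda>s. V_diff n t s (g s)) integrable_on {0..t}"
    and same: "\<And>I. ((\<lambda>s. V n t s (f s) - V 0 t s (f s)) has_integral I) {0..t} \<longleftrightarrow>
        ((\<lambda>s. V_diff n t s (g s)) has_integral I) {0..t}"
    using V_sub_ae_eq_V_diff[OF t F f ae, where n = n] by blast
  have weight_int: "weight t integrable_on {0..t}"
    using has_integral_weight[OF t(1)] by blast
  have bound_integral:
    "((\<lambda>s. A * weight t s + B) has_integral A * integral {0..t} (weight t) + B * t) {0..t}"
    using has_integral_add[OF has_integral_mult_right[OF integrable_integral[OF weight_int], of A]
        has_integral_const_real[of B 0 t]] t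
    by (simp add: mult.commute)
  have "integral {0..t} (\<lambda>s. V n t s (f s) - V 0 t s (f s)) = integral {0..t} (\<lambda>s. V_diff n t s (g s))"
    using same int by (simp add: integral_unique integrable_integral)
  also have "norm \<dots> \<le> integral {0..t} (\<lambda>s. A * weight t s + B)"
    using int bound_integral small g_C by (intro integral_norm_bound_integral) auto
  also have "\<dots> = A * integral {0..t} (weight t) + B * t"
    using bound_integral by (rule integral_unique)
  also have "\<dots> \<le> A * (T + T powr (1 - \<alpha>) / (1 - \<alpha>)) + B * T"
    using A B t integral_weight_le[OF t] by (intro add_mono mult_left_mono) auto
  finally show ?thesis .
qed

lemma uniform_limit_integral_V_sub:
  assumes T: "T > 0" and F: "compact (closure F)"
    and f: "\<And>n. f n \<in> borel_measurable (restrict_space lebesgue {0..T})"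
    and ae: "\<And>n. AE s in lebesgue. s \<in> {0..T} \<longrightarrow> f n s \<in> F"
    and dense: "closure (range i) = UNIV"
    and conv: "\<And>y \<epsilon>. \<epsilon> > 0 \<Longrightarrow> \<exists>N. \<forall>n\<ge>N. \<forall>t s. 0 \<le> s \<and> s < t \<and> t \<le> T \<longrightarrow>
        norm (V n t s (i y) - V 0 t s (i y)) < \<epsilon>"
  shows "uniform_limit {0..T}
      (\<lambda>n t. integral {0..t} (\<lambda>s. V n t s (f n s) - V 0 t s (f n s))) (\<lambda>t. 0) sequentially"
  unfolding uniform_limit_iff
proof (intro allI impI)
  fix e :: real
  assume e: "e > 0"
  define B where "B = 2 * K * (T + T powr (1 - \<alpha>) / (1 - \<alpha>)) + T"
  have "0 \<le> 2 * K * (T + T powr (1 - \<alpha>) / (1 - \<alpha>))"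
    using K T alpha by (intro mult_nonneg_nonneg add_nonneg_nonneg divide_nonneg_nonneg) auto
  then have B: "B > 0"
    using T by (simp add: B_def)
  define \<epsilon> where "\<epsilon> = e / (2 * B)"
  have \<epsilon>: "\<epsilon> > 0"
    using e B by (simp add: \<epsilon>_def)
  have "\<forall>\<^sub>F n in sequentially. \<forall>t s x. 0 \<le> s \<and> s \<le> t \<and> t \<le> T \<and> x \<in> insert 0 (closure F) \<longrightarrow>
      norm (V_diff n t s x) \<le> \<epsilon> * (2 * K * weight t s + 1)"
    using F dense conv \<epsilon> by (intro eventually_norm_V_diff_le) auto
  then show "\<forall>\<^sub>F n in sequentially. \<forall>t\<in>{0..T}.
      dist (integral {0..t} (\<lambda>s. V n t s (f n s) - V 0 t s (f n s))) 0 < e"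
  proof (rule eventually_mono, intro ballI)
    fix n t
    assume small: "\<forall>t s x. 0 \<le> s \<and> s \<le> t \<and> t \<le> T \<and> x \<in> insert 0 (closure F) \<longrightarrow>
        norm (V_diff n t s x) \<le> \<epsilon> * (2 * K * weight t s + 1)"
      and t: "t \<in> {0..T}"
    have "norm (integral {0..t} (\<lambda>s. V n t s (f n s) - V 0 t s (f n s)))
        \<le> (\<epsilon> * 2 * K) * (T + T powr (1 - \<alpha>) / (1 - \<alpha>)) + \<epsilon> * T"
      using t small \<epsilon> K by (intro norm_integral_V_sub_le[OF _ _ F f ae]) (auto simp: algebra_simps)
    also have "\<dots> = \<epsilon> * B"
      by (simp add: B_def algebra_simps)
    also have "\<dots> = e / 2"
      using B by (simp add: \<epsilon>_def)
    finally show "dist (integral {0..t} (\<lambda>s. V n t s (f n s) - V 0 t s (f n s))) 0 < e"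
      using e by simp
  qed
qed

end

theorem lemma4p3:
  fixes i :: "'b::banach \<Rightarrow> 'a::banach"
    and U :: "nat \<Rightarrow> real \<Rightarrow> real \<Rightarrow> 'a \<Rightarrow> 'a"
    and V :: "nat \<Rightarrow> real \<Rightarrow> real \<Rightarrow> 'a \<Rightarrow> 'b"
    and \<alpha> K T :: real
    and F :: "'a set"
    and f :: "nat \<Rightarrow> real \<Rightarrow> 'a"
  assumes alpha: "0 < \<alpha>" "\<alpha> < 1"
    and emb: "bounded_linear i" "inj i" "closure (range i) = UNIV"
    and evol: "\<And>n. evolution_system (U n)"
    and smooth: "\<And>n t s x. 0 \<le> s \<Longrightarrow> s < t \<Longrightarrow> i (V n t s x) = U n t s x"
    and K: "K > 0"
    and P1a: "\<And>n t s y. 0 \<le> s \<Longrightarrow> s < t \<Longrightarrow> norm (V n t s (i y)) \<le> K * norm y"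
    and P1b: "\<And>n t s x. 0 \<le> s \<Longrightarrow> s < t \<Longrightarrow>
                 norm (V n t s x) \<le> K * (1 + (t - s) powr (- \<alpha>)) * norm x"
    and P2: "\<And>y T'. T' > 0 \<Longrightarrow>
               \<forall>\<epsilon>>0. \<exists>N. \<forall>n\<ge>N. \<forall>t s. 0 \<le> s \<and> s < t \<and> t \<le> T' \<longrightarrow>
                  norm (V n t s (i y) - V 0 t s (i y)) < \<epsilon>"
    and T: "T > 0"
    and F: "compact (closure F)"
    and f_Linf: "\<And>n. f n \<in> borel_measurable (restrict_space lebesgue {0..T})"
    and f_F: "\<And>n. AE s in lebesgue. s \<in> {0..T} \<longrightarrow> f n s \<in> F"
  shows "(\<forall>n. \<forall>t\<in>{0..T}.
            (\<lambda>s. V n t s (f n s) - V 0 t s (f n s)) integrable_on {0..t})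
       \<and> uniform_limit {0..T}
           (\<lambda>n t. integral {0..t} (\<lambda>s. V n t s (f n s) - V 0 t s (f n s)))
           (\<lambda>t. 0) sequentially"
proof -
  interpret smoothing_evolution_family i U V \<alpha> K
    using alpha emb(1,2) evol smooth K P1b by (intro smoothing_evolution_family.intro) auto
  have "\<forall>n. \<forall>t\<in>{0..T}. (\<lambda>s. V n t s (f n s) - V 0 t s (f n s)) integrable_on {0..t}"
    using integrable_on_V_sub[OF _ _ F f_Linf f_F] by auto
  moreover have "uniform_limit {0..T}
      (\<lambda>n t. integral {0..t} (\<lambda>s. V n t s (f n s) - V 0 t s (f n s))) (\<lambda>t. 0) sequentially"
    using P2[OF T] emb(3) by (intro uniform_limit_integral_V_sub[OF T F f_Linf f_F]) auto
  ultimately show ?thesis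
    by blast
qed

end
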